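(* Let $\mathcal{A}$ be a clone that admits no minion homomorphism to $\mathcal{P}$. Then there exists a finite graph $\mathbb{G}$ that is not 3-colorable such that $\mathcal{A}$ satisfies $\Sigma_{\mathbb{G}}$.
   Context: A graph is a structure $(V,E)$ with a single symmetric binary relation $E$ (loops allowed); it is 3-colorable if it admits a homomorphism to the complete loopless graph $\mathbb{K}_3$ on three vertices. A clone on a set $A$ is a set of finitary operations on $A$ containing all projections and closed under composition; $\mathcal{P}$ is the clone of projections on $\{0,1\}$. A minion homomorphism between clones $\mathcal{A}\to\mathcal{B}$ is an arity-preserving map $\xi$ such that for all $n$-ary $f\in\mathcal{A}$ and all $\pi:\{1,\dots,n\}\to\{1,\dots,k\}$, $\xi$ maps $(x_1,\dots,x_k)\mapsto f(x_{\pi(1)},\dots,x_{\pi(n)})$ to $(x_1,\dots,x_k)\mapsto \xi(f)(x_{\pi(1)},\dots,x_{\pi(n)})$. A clone satisfies a height 1 condition (finite set of universally quantified identities $f(x_{\pi(1)},\dots,x_{\pi(n)})\approx g(x_{\rho(1)},\dots,x_{\rho(m)})$) if its symbols can be assigned functions of the clone of the right arities making all identities true. For a finite graph $\mathbb{G}=(V,E)$, $\Sigma_{\mathbb{G}}$ is the height 1 condition with a ternary symbol $f_v$ for each $v\in V$, a $6$-ary symbol $g_{(u,v)}$ for each $(u,v)\in E$, and, for each $(u,v)\in E$, the identities $f_u(x,y,z)\approx g_{(u,v)}(x,y,x,z,y,z)$ and $f_v(x,y,z)\approx g_{(u,v)}(y,x,z,x,z,y)$. *)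

theory Defs
  imports Main
begin

text \<open>An n-ary operation on a set A is represented canonically as a function on lists:
  it is defined on lists of length n with entries in A, takes values in A, and is
  undefined elsewhere. Coordinates are 0-indexed.\<close>

definition restr :: "'a set \<Rightarrow> nat \<Rightarrow> ('a list \<Rightarrow> 'a) \<Rightarrow> ('a list \<Rightarrow> 'a)" where
  "restr A n h = (\<lambda>xs. if length xs = n \<and> set xs \<subseteq> A then h xs else undefined)"

definition op_on :: "'a set \<Rightarrow> nat \<Rightarrow> ('a list \<Rightarrow> 'a) \<Rightarrow> bool" where
  "op_on A n f \<longleftrightarrow>
     (\<forall>xs. length xs = n \<and> set xs \<subseteq> A \<longrightarrow> f xs \<in> A) \<and>
     (\<forall>xs. \<not> (length xs = n \<and> set xs \<subseteq> A) \<longrightarrow> f xs = undefined)"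

definition proj :: "'a set \<Rightarrow> nat \<Rightarrow> nat \<Rightarrow> ('a list \<Rightarrow> 'a)" where
  "proj A n i = restr A n (\<lambda>xs. xs ! i)"

definition compose :: "'a set \<Rightarrow> nat \<Rightarrow> nat \<Rightarrow> ('a list \<Rightarrow> 'a) \<Rightarrow> (nat \<Rightarrow> 'a list \<Rightarrow> 'a) \<Rightarrow> ('a list \<Rightarrow> 'a)" where
  "compose A n m f gs = restr A m (\<lambda>xs. f (map (\<lambda>i. gs i xs) [0..<n]))"

definition clone :: "'a set \<Rightarrow> (nat \<Rightarrow> ('a list \<Rightarrow> 'a) set) \<Rightarrow> bool" where
  "clone A C \<longleftrightarrow>
     (\<forall>n f. f \<in> C n \<longrightarrow> op_on A n f) \<and>
     (\<forall>n i. i < n \<longrightarrow> proj A n i \<in> C n) \<and>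
     (\<forall>n m f gs. f \<in> C n \<longrightarrow> (\<forall>i<n. gs i \<in> C m) \<longrightarrow> compose A n m f gs \<in> C m)"

definition minor :: "'a set \<Rightarrow> nat \<Rightarrow> nat \<Rightarrow> (nat \<Rightarrow> nat) \<Rightarrow> ('a list \<Rightarrow> 'a) \<Rightarrow> ('a list \<Rightarrow> 'a)" where
  "minor A n k \<pi> f = restr A k (\<lambda>xs. f (map (\<lambda>i. xs ! \<pi> i) [0..<n]))"

text \<open>The clone P of projections on {0,1} (represented by the type bool).\<close>
definition proj_clone :: "nat \<Rightarrow> (bool list \<Rightarrow> bool) set" where
  "proj_clone n = {proj UNIV n i | i. i < n}"

definition minion_hom ::
  "'a set \<Rightarrow> (nat \<Rightarrow> ('a list \<Rightarrow> 'a) set) \<Rightarrow> 'b set \<Rightarrow> (nat \<Rightarrow> ('b list \<Rightarrow> 'b) set)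
    \<Rightarrow> (nat \<Rightarrow> ('a list \<Rightarrow> 'a) \<Rightarrow> ('b list \<Rightarrow> 'b)) \<Rightarrow> bool" where
  "minion_hom A C B D \<xi> \<longleftrightarrow>
     (\<forall>n f. f \<in> C n \<longrightarrow> \<xi> n f \<in> D n) \<and>
     (\<forall>n k \<pi> f. f \<in> C n \<longrightarrow> (\<forall>i<n. \<pi> i < k) \<longrightarrow>
        \<xi> k (minor A n k \<pi> f) = minor B n k \<pi> (\<xi> n f))"

definition graph :: "'v set \<Rightarrow> ('v \<times> 'v) set \<Rightarrow> bool" where
  "graph V E \<longleftrightarrow> finite V \<and> E \<subseteq> V \<times> V \<and> sym E"

definition three_colorable :: "'v set \<Rightarrow> ('v \<times> 'v) set \<Rightarrow> bool" where
  "three_colorable V E \<longleftrightarrow>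
     (\<exists>c :: 'v \<Rightarrow> nat. (\<forall>v\<in>V. c v < 3) \<and> (\<forall>(u,v)\<in>E. c u \<noteq> c v))"

definition satisfies_Sigma :: "'a set \<Rightarrow> (nat \<Rightarrow> ('a list \<Rightarrow> 'a) set) \<Rightarrow> 'v set \<Rightarrow> ('v \<times> 'v) set \<Rightarrow> bool" where
  "satisfies_Sigma A C V E \<longleftrightarrow>
     (\<exists>f :: 'v \<Rightarrow> ('a list \<Rightarrow> 'a). \<exists>g :: ('v \<times> 'v) \<Rightarrow> ('a list \<Rightarrow> 'a).
        (\<forall>v\<in>V. f v \<in> C 3) \<and> (\<forall>e\<in>E. g e \<in> C 6) \<and>
        (\<forall>(u,v)\<in>E. \<forall>x\<in>A. \<forall>y\<in>A. \<forall>z\<in>A.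
            f u [x,y,z] = g (u,v) [x,y,x,z,y,z] \<and>
            f v [x,y,z] = g (u,v) [y,x,z,x,z,y]))"

end

theory Submission
  imports Defs "HOL-Analysis.Function_Topology" "HOL-Analysis.Product_Topology"
begin

(* Call two ternary operations f, f' of the clone adjacent if some 6-ary g satisfies
   f(x,y,z) = g(x,y,x,z,y,z) and f'(x,y,z) = g(y,x,z,x,z,y).  A proper 3-colouring c of
   this (possibly infinite) graph yields a minion homomorphism to the projections: for an
   n-ary f, the map sigma |-> c(f(x_sigma(1),...,x_sigma(n))) on {0,1,2}^n is a polymorphism
   of K_3, because coordinatewise distinct sigma, tau give adjacent minors.  Polymorphisms of
   K_3 depend on a single coordinate (the sets S on which the choice between two colours
   falls on the S-side form an ultrafilter on a finite set), and sending f to that coordinate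
   commutes with minors.  Hence the graph is not 3-colourable, and by compactness neither is
   one of its finite subgraphs, which is the required graph. *)

lemma finite_ultrafilter_principal:
  fixes P :: "'a set \<Rightarrow> bool"
  assumes "finite I"
    and Compl: "\<And>S. P (- S) \<longleftrightarrow> \<not> P S"
    and Int: "\<And>S T. P S \<Longrightarrow> P T \<Longrightarrow> P (S \<inter> T)"
    and mono: "\<And>S T. P S \<Longrightarrow> S \<subseteq> T \<Longrightarrow> P T"
    and local: "\<And>S T. \<forall>i\<in>I. i \<in> S \<longleftrightarrow> i \<in> T \<Longrightarrow> P S \<longleftrightarrow> P T"
  shows "\<exists>i\<in>I. \<forall>S. P S \<longleftrightarrow> i \<in> S"
proof -
  have "\<not> P {}"
    using mono[of "{}" UNIV] Compl[of "{}"] by auto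
  have Inter: "P (\<Inter>i\<in>J. - {i})" if "finite J" "\<forall>i\<in>J. P (- {i})" for J
    using that
  proof (induction J rule: finite_induct)
    case empty
    then show ?case
      using Compl[of "{}"] \<open>\<not> P {}\<close> by simp
  qed (simp add: Int)
  obtain i where "i \<in> I" "P {i}"
  proof (rule ccontr)
    assume "\<not> thesis"
    with that Compl have "\<forall>i\<in>I. P (- {i})"
      by blast
    then have "P (\<Inter>i\<in>I. - {i})"
      using Inter \<open>finite I\<close> by blast
    moreover have "P (\<Inter>i\<in>I. - {i}) \<longleftrightarrow> P {}"
      by (rule local) blast
    ultimately show False
      using \<open>\<not> P {}\<close> by blast
  qed
  moreover have "P S \<longleftrightarrow> i \<in> S" for S
    using mono[OF \<open>P {i}\<close>, of S] mono[of S "- {i}"] Compl[of "{i}"] \<open>P {i}\<close> by blast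
  ultimately show ?thesis
    by blast
qed

definition two_valued :: "nat \<Rightarrow> nat \<Rightarrow> nat set \<Rightarrow> nat \<Rightarrow> nat" where
  "two_valued a b S = (\<lambda>j. if j \<in> S then a else b)"

definition determined_by :: "nat \<Rightarrow> ((nat \<Rightarrow> nat) \<Rightarrow> nat) \<Rightarrow> nat \<Rightarrow> bool" where
  "determined_by n h i \<longleftrightarrow> i < n \<and> (\<forall>\<sigma>. (\<forall>j<n. \<sigma> j < 3) \<longrightarrow> h \<sigma> = h (\<lambda>_. \<sigma> i))"

(* Tuples in {0,1,2}^n are functions nat => nat read on the coordinates below n. *)
locale K3_polymorphism =
  fixes n :: nat and h :: "(nat \<Rightarrow> nat) \<Rightarrow> nat"
  assumes congruent: "\<And>\<sigma> \<tau>. \<forall>i<n. \<sigma> i = \<tau> i \<Longrightarrow> h \<sigma> = h \<tau>"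
    and maps_to: "\<And>\<sigma>. \<forall>i<n. \<sigma> i < 3 \<Longrightarrow> h \<sigma> < 3"
    and adjacent: "\<And>\<sigma> \<tau>. \<forall>i<n. \<sigma> i < 3 \<Longrightarrow> \<forall>i<n. \<tau> i < 3 \<Longrightarrow> \<forall>i<n. \<sigma> i \<noteq> \<tau> i \<Longrightarrow> h \<sigma> \<noteq> h \<tau>"
begin

lemma const_inj: "a < 3 \<Longrightarrow> b < 3 \<Longrightarrow> a \<noteq> b \<Longrightarrow> h (\<lambda>_. a) \<noteq> h (\<lambda>_. b)"
  by (rule adjacent) auto

lemma no_common_neighbour_of_three:
  assumes "\<forall>i<n. \<sigma> i < 3"
    and "\<forall>i<n. \<tau>\<^sub>0 i < 3 \<and> \<sigma> i \<noteq> \<tau>\<^sub>0 i" "\<forall>i<n. \<tau>\<^sub>1 i < 3 \<and> \<sigma> i \<noteq> \<tau>\<^sub>1 i"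
    "\<forall>i<n. \<tau>\<^sub>2 i < 3 \<and> \<sigma> i \<noteq> \<tau>\<^sub>2 i"
    and "h \<tau>\<^sub>0 = h (\<lambda>_. 0)" "h \<tau>\<^sub>1 = h (\<lambda>_. 1)" "h \<tau>\<^sub>2 = h (\<lambda>_. 2)"
  shows False
proof -
  have "h \<sigma> \<noteq> h \<tau>\<^sub>0" "h \<sigma> \<noteq> h \<tau>\<^sub>1" "h \<sigma> \<noteq> h \<tau>\<^sub>2"
    by (rule adjacent; use assms(1-4) in simp)+
  moreover have "h \<tau>\<^sub>0 \<noteq> h \<tau>\<^sub>1" "h \<tau>\<^sub>0 \<noteq> h \<tau>\<^sub>2" "h \<tau>\<^sub>1 \<noteq> h \<tau>\<^sub>2"
    using assms(5-7) const_inj[of 0 1] const_inj[of 0 2] const_inj[of 1 2] by auto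
  moreover have "h \<sigma> < 3" "h \<tau>\<^sub>0 < 3" "h \<tau>\<^sub>1 < 3" "h \<tau>\<^sub>2 < 3"
    using assms(1-4) by (auto intro: maps_to)
  ultimately show False
    by linarith
qed

lemma conservative:
  assumes "\<forall>i<n. \<sigma> i < 3"
  shows "\<exists>j<n. h \<sigma> = h (\<lambda>_. \<sigma> j)"
proof -
  have "h \<sigma> \<in> {h (\<lambda>_. 0), h (\<lambda>_. 1), h (\<lambda>_. 2)}"
    using maps_to[OF assms] maps_to[of "\<lambda>_. 0"] maps_to[of "\<lambda>_. 1"] maps_to[of "\<lambda>_. 2"]
      const_inj[of 0 1] const_inj[of 0 2] const_inj[of 1 2] by auto
  then obtain c :: nat where c: "c \<in> {0, 1, 2}" "h \<sigma> = h (\<lambda>_. c)"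
    by blast
  have "\<exists>j<n. \<sigma> j = c"
  proof (rule ccontr)
    assume "\<not> (\<exists>j<n. \<sigma> j = c)"
    then have "h \<sigma> \<noteq> h (\<lambda>_. c)"
      using c(1) by (intro adjacent[OF assms]) auto
    with c(2) show False
      by contradiction
  qed
  with c(2) show ?thesis
    by auto
qed

lemma two_valued_cases:
  assumes "a < 3" "b < 3"
  shows "h (two_valued a b S) = h (\<lambda>_. a) \<or> h (two_valued a b S) = h (\<lambda>_. b)"
proof -
  from assms have "\<forall>i<n. two_valued a b S i < 3"
    by (simp add: two_valued_def)
  then obtain j where "h (two_valued a b S) = h (\<lambda>_. two_valued a b S j)"
    using conservative by blast
  then show ?thesis
    by (cases "j \<in> S") (auto simp: two_valued_def)
qed

definition first_wins :: "nat \<Rightarrow> nat \<Rightarrow> nat set \<Rightarrow> bool" where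
  "first_wins a b S \<longleftrightarrow> h (two_valued a b S) = h (\<lambda>_. a)"

lemma first_wins_swap:
  assumes "a < 3" "b < 3" "a \<noteq> b"
  shows "first_wins b a S \<longleftrightarrow> first_wins a b S"
proof -
  have "h (two_valued b a S) \<noteq> h (two_valued a b S)"
    using assms by (intro adjacent) (auto simp: two_valued_def)
  then show ?thesis
    using two_valued_cases[of a b S] two_valued_cases[of b a S] const_inj[of a b] assms
    by (auto simp: first_wins_def)
qed

lemma first_wins_rotate:
  assumes "a < 3" "b < 3" "c < 3" "a \<noteq> b" "a \<noteq> c" "b \<noteq> c" "first_wins a b S"
  shows "first_wins c a S"
proof -
  have "h (two_valued c a S) \<noteq> h (two_valued a b S)"
    using assms by (intro adjacent) (auto simp: two_valued_def)
  then show ?thesis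
    using two_valued_cases[of c a S] assms by (auto simp: first_wins_def)
qed

(* The choice does not depend on the two colours, which makes {S. first_wins 0 1 S} an
   ultrafilter on the coordinates. *)
lemma first_wins_iff:
  assumes "a < 3" "b < 3" "a \<noteq> b"
  shows "first_wins a b S \<longleftrightarrow> first_wins 0 1 S"
proof -
  have "first_wins 0 1 S \<Longrightarrow> first_wins 2 0 S" "first_wins 2 0 S \<Longrightarrow> first_wins 1 2 S"
    "first_wins 1 2 S \<Longrightarrow> first_wins 0 1 S"
    using first_wins_rotate[of 0 1 2 S] first_wins_rotate[of 2 0 1 S] first_wins_rotate[of 1 2 0 S]
    by auto
  moreover have "first_wins 1 0 S \<longleftrightarrow> first_wins 0 1 S" "first_wins 0 2 S \<longleftrightarrow> first_wins 2 0 S"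
    "first_wins 2 1 S \<longleftrightarrow> first_wins 1 2 S"
    using first_wins_swap[of 0 1 S] first_wins_swap[of 2 0 S] first_wins_swap[of 1 2 S] by auto
  moreover have "a \<in> {0, 1, 2}" "b \<in> {0, 1, 2}"
    using assms by auto
  ultimately show ?thesis
    using \<open>a \<noteq> b\<close> by auto
qed

lemma first_wins_Compl: "first_wins 0 1 (- S) \<longleftrightarrow> \<not> first_wins 0 1 S"
proof -
  have "two_valued 0 1 (- S) = two_valued 1 0 S"
    by (auto simp: two_valued_def)
  then have "first_wins 0 1 (- S) \<longleftrightarrow> \<not> first_wins 1 0 S"
    using two_valued_cases[of 1 0 S] const_inj[of 0 1] by (auto simp: first_wins_def)
  then show ?thesis
    using first_wins_iff[of 1 0 S] by simp
qed

lemma first_wins_mono: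
  assumes "first_wins 0 1 S" "S \<subseteq> T"
  shows "first_wins 0 1 T"
proof (rule ccontr)
  assume "\<not> first_wins 0 1 T"
  then have "first_wins 0 1 (- T)"
    using first_wins_Compl by blast
  moreover have "first_wins 1 0 S" "first_wins 2 0 S"
    using assms(1) first_wins_iff[of 1 0 S] first_wins_iff[of 2 0 S] by simp_all
  ultimately show False
    using assms(2) by (intro no_common_neighbour_of_three[where
        \<sigma> = "\<lambda>j. if j \<in> S then 0 else if j \<in> T then 2 else 1" and \<tau>\<^sub>0 = "two_valued 0 1 (- T)"
        and \<tau>\<^sub>1 = "two_valued 1 0 S" and \<tau>\<^sub>2 = "two_valued 2 0 S"])
      (auto simp: first_wins_def two_valued_def)
qed

lemma first_wins_Int:
  assumes "first_wins 0 1 S" "first_wins 0 1 T"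
  shows "first_wins 0 1 (S \<inter> T)"
proof (rule ccontr)
  assume "\<not> first_wins 0 1 (S \<inter> T)"
  then have "first_wins 0 1 (- (S \<inter> T))"
    using first_wins_Compl by blast
  then have "first_wins 2 0 (- (S \<inter> T))"
    using first_wins_iff[of 2 0 "- (S \<inter> T)"] by simp
  moreover have "first_wins 1 2 T"
    using assms(2) first_wins_iff[of 1 2 T] by simp
  ultimately show False
    using assms(1) by (intro no_common_neighbour_of_three[where
        \<sigma> = "\<lambda>j. if j \<notin> S then 0 else if j \<notin> T then 1 else 2" and \<tau>\<^sub>0 = "two_valued 0 1 S"
        and \<tau>\<^sub>1 = "two_valued 1 2 T" and \<tau>\<^sub>2 = "two_valued 2 0 (- (S \<inter> T))"])
      (auto simp: first_wins_def two_valued_def)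
qed

lemma first_wins_local:
  assumes "\<forall>i\<in>{..<n}. i \<in> S \<longleftrightarrow> i \<in> T"
  shows "first_wins 0 1 S \<longleftrightarrow> first_wins 0 1 T"
proof -
  have "h (two_valued 0 1 S) = h (two_valued 0 1 T)"
    using assms by (intro congruent) (simp add: two_valued_def)
  then show ?thesis
    by (simp add: first_wins_def)
qed

lemma first_wins_principal: "\<exists>i<n. \<forall>S. first_wins 0 1 S \<longleftrightarrow> i \<in> S"
  using finite_ultrafilter_principal[of "{..<n}" "first_wins 0 1"]
    first_wins_Compl first_wins_Int first_wins_mono first_wins_local by auto

lemma ex_determined_by: "\<exists>i. determined_by n h i"
proof -
  obtain i where i: "i < n" "\<And>S. first_wins 0 1 S \<longleftrightarrow> i \<in> S"
    using first_wins_principal by blast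
  have "h \<sigma> = h (\<lambda>_. \<sigma> i)" if \<sigma>: "\<forall>j<n. \<sigma> j < 3" for \<sigma>
  proof (rule ccontr)
    assume ne: "h \<sigma> \<noteq> h (\<lambda>_. \<sigma> i)"
    obtain j where j: "j < n" "h \<sigma> = h (\<lambda>_. \<sigma> j)"
      using conservative[OF \<sigma>] by blast
    define v where "v = \<sigma> j"
    define w where "w = (if v = 0 then 1 else 0 :: nat)"
    define S where "S = {k. \<sigma> k = v}"
    have "v < 3" "w < 3" "w \<noteq> v"
      using \<sigma> j by (auto simp: v_def w_def)
    have "i \<notin> S"
      using ne j by (auto simp: S_def v_def)
    then have "\<not> first_wins w v S"
      using i(2) first_wins_iff[OF \<open>w < 3\<close> \<open>v < 3\<close> \<open>w \<noteq> v\<close>] by simp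
    then have "h (two_valued w v S) = h \<sigma>"
      using two_valued_cases[OF \<open>w < 3\<close> \<open>v < 3\<close>, of S] j by (simp add: first_wins_def v_def)
    moreover have "h \<sigma> \<noteq> h (two_valued w v S)"
      using \<sigma> \<open>v < 3\<close> \<open>w < 3\<close> \<open>w \<noteq> v\<close>
      by (intro adjacent) (auto simp: two_valued_def S_def)
    ultimately show False
      by simp
  qed
  with i(1) show ?thesis
    unfolding determined_by_def by blast
qed

lemma determined_by_unique:
  assumes "determined_by n h i" "determined_by n h j"
  shows "i = j"
proof (rule ccontr)
  assume "i \<noteq> j"
  define \<sigma> where "\<sigma> = (\<lambda>k. if k = i then 0 else 1 :: nat)"
  have "\<forall>k<n. \<sigma> k < 3"
    by (simp add: \<sigma>_def)
  then have "h \<sigma> = h (\<lambda>_. \<sigma> i)" "h \<sigma> = h (\<lambda>_. \<sigma> j)"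
    using assms unfolding determined_by_def by blast+
  then have "h (\<lambda>_. 0) = h (\<lambda>_. 1)"
    using \<open>i \<noteq> j\<close> by (simp add: \<sigma>_def)
  then show False
    using const_inj[of 0 1] by simp
qed

lemma ex1_determined_by: "\<exists>!i. determined_by n h i"
  using ex_determined_by determined_by_unique by blast

end

definition proper_coloring :: "nat \<Rightarrow> 'v set \<Rightarrow> ('v \<Rightarrow> 'v \<Rightarrow> bool) \<Rightarrow> ('v \<Rightarrow> nat) \<Rightarrow> bool" where
  "proper_coloring k V R c \<longleftrightarrow> (\<forall>v\<in>V. c v < k) \<and> (\<forall>u\<in>V. \<forall>v\<in>V. R u v \<longrightarrow> c u \<noteq> c v)"

lemma closedin_product_discrete_ne:
  fixes S :: "'b set" and I :: "'a set"
  assumes "u \<in> I" "v \<in> I"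
  defines "X \<equiv> product_topology (\<lambda>_. discrete_topology S) I"
  shows "closedin X {c \<in> topspace X. c u \<noteq> c v}"
proof -
  have "continuous_map X (prod_topology (discrete_topology S) (discrete_topology S)) (\<lambda>c. (c u, c v))"
    unfolding X_def using assms(1,2) by (intro continuous_map_pairedI continuous_map_product_projection)
  then have "closedin X {c \<in> topspace X. (c u, c v) \<in> {p \<in> S \<times> S. fst p \<noteq> snd p}}"
    by (rule closedin_continuous_map_preimage) (auto simp flip: prod_topology_discrete_topology)
  moreover have "c u \<in> S" "c v \<in> S" if "c \<in> topspace X" for c
    using that assms(1,2) by (auto simp: X_def)
  then have "{c \<in> topspace X. (c u, c v) \<in> {p \<in> S \<times> S. fst p \<noteq> snd p}} = {c \<in> topspace X. c u \<noteq> c v}"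
    by auto
  ultimately show ?thesis
    by simp
qed

lemma compact_space_Inter_nonempty:
  assumes "compact_space X" "\<And>e. e \<in> E \<Longrightarrow> closedin X (K e)"
    and "\<And>D. finite D \<Longrightarrow> D \<subseteq> E \<Longrightarrow> topspace X \<inter> (\<Inter>e\<in>D. K e) \<noteq> {}"
  shows "topspace X \<inter> (\<Inter>e\<in>E. K e) \<noteq> {}"
proof -
  have "topspace X \<inter> \<Inter>\<F> \<noteq> {}" if "finite \<F>" "\<F> \<subseteq> K ` E" for \<F>
  proof -
    have "\<exists>D\<subseteq>E. finite D \<and> \<F> = K ` D"
      by (rule finite_subset_image[OF that])
    then obtain D where "D \<subseteq> E" "finite D" "\<F> = K ` D"
      by auto
    then show ?thesis
      using assms(3) by simp
  qed
  then show ?thesis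
    using assms(1)[unfolded compact_space_def compactin_fip, THEN conjunct2, rule_format, of "K ` E"] assms(2)
    by auto
qed

lemma proper_coloring_compactness:
  assumes finite_colorable: "\<And>F. finite F \<Longrightarrow> F \<subseteq> V \<Longrightarrow> \<exists>c. proper_coloring k F R c"
  shows "\<exists>c. proper_coloring k V R c"
proof (cases "V = {}")
  case True
  then show ?thesis
    by (simp add: proper_coloring_def)
next
  case False
  then obtain v where "v \<in> V"
    by blast
  then have "0 < k"
    using finite_colorable[of "{v}"] by (auto simp: proper_coloring_def)
  define X where "X = product_topology (\<lambda>_. discrete_topology {..<k}) V"
  define edges where "edges = {(u, v). u \<in> V \<and> v \<in> V \<and> R u v}"
  define separates where "separates e = {c \<in> topspace X. c (fst e) \<noteq> c (snd e)}" for e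
  have "compact_space X"
    unfolding X_def by (simp add: compact_space_product_topology compact_space_discrete_topology)
  moreover have "closedin X (separates e)" if "e \<in> edges" for e
    using that closedin_product_discrete_ne[of "fst e" V "snd e" "{..<k}"]
    unfolding separates_def edges_def X_def by auto
  moreover have "topspace X \<inter> (\<Inter>e\<in>D. separates e) \<noteq> {}" if "finite D" "D \<subseteq> edges" for D
  proof -
    define F where "F = fst ` D \<union> snd ` D"
    have "finite F" "F \<subseteq> V"
      using that by (auto simp: F_def edges_def)
    then obtain c where c: "proper_coloring k F R c"
      using finite_colorable by blast
    define p where "p = restrict (\<lambda>v. if v \<in> F then c v else 0) V"
    have "p \<in> topspace X"
      using c \<open>0 < k\<close> by (auto simp: X_def p_def proper_coloring_def)
    moreover have "p \<in> separates (u, v)" if "(u, v) \<in> D" for u v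
    proof -
      have "u \<in> F" "v \<in> F"
        using rev_image_eqI[OF that, of u fst] rev_image_eqI[OF that, of v snd] by (simp_all add: F_def)
      moreover have "u \<in> V" "v \<in> V" "R u v"
        using that \<open>D \<subseteq> edges\<close> by (auto simp: edges_def)
      ultimately show ?thesis
        using c \<open>p \<in> topspace X\<close> by (simp add: separates_def p_def proper_coloring_def)
    qed
    ultimately have "p \<in> topspace X \<inter> (\<Inter>e\<in>D. separates e)"
      by auto
    then show ?thesis
      by blast
  qed
  ultimately have "topspace X \<inter> (\<Inter>e\<in>edges. separates e) \<noteq> {}"
    by (rule compact_space_Inter_nonempty)
  then obtain c where c: "c \<in> topspace X" "\<forall>e\<in>edges. c \<in> separates e"
    by blast
  have "\<forall>v\<in>V. c v < k"
    using c(1) by (auto simp: X_def)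
  moreover have "c u \<noteq> c v" if "u \<in> V" "v \<in> V" "R u v" for u v
    using c(2)[rule_format, of "(u, v)"] that by (simp add: edges_def separates_def)
  ultimately have "proper_coloring k V R c"
    by (simp add: proper_coloring_def)
  then show ?thesis
    by blast
qed

lemma minor_apply:
  "length xs = k \<Longrightarrow> set xs \<subseteq> A \<Longrightarrow> minor A n k \<pi> f xs = f (map (\<lambda>i. xs ! \<pi> i) [0..<n])"
  by (simp add: minor_def restr_def)

lemma minor_cong: "\<forall>i<n. \<pi> i = \<pi>' i \<Longrightarrow> minor A n k \<pi> f = minor A n k \<pi>' f"
  unfolding minor_def by (intro arg_cong[where f = "restr A k"] ext arg_cong[where f = f] map_cong) auto

lemma minor_in_clone:
  assumes "clone A C" "f \<in> C n" "\<forall>i<n. \<pi> i < k"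
  shows "minor A n k \<pi> f \<in> C k"
proof -
  have "Defs.compose A n k f (\<lambda>i. proj A k (\<pi> i)) \<in> C k"
    using assms unfolding clone_def by simp
  moreover have "Defs.compose A n k f (\<lambda>i. proj A k (\<pi> i)) = minor A n k \<pi> f"
    by (auto simp: Defs.compose_def minor_def restr_def proj_def fun_eq_iff)
  ultimately show ?thesis
    by simp
qed

lemma minor_minor:
  assumes "\<forall>i<n. \<pi> i < k" "\<forall>j<k. \<sigma> j < m"
  shows "minor A k m \<sigma> (minor A n k \<pi> f) = minor A n m (\<sigma> \<circ> \<pi>) f"
proof
  fix xs :: "'a list"
  show "minor A k m \<sigma> (minor A n k \<pi> f) xs = minor A n m (\<sigma> \<circ> \<pi>) f xs"
  proof (cases "length xs = m \<and> set xs \<subseteq> A")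
    case True
    then have "set (map (\<lambda>j. xs ! \<sigma> j) [0..<k]) \<subseteq> A"
      using assms(2) by (auto dest!: nth_mem)
    moreover have "map (\<lambda>i. map (\<lambda>j. xs ! \<sigma> j) [0..<k] ! \<pi> i) [0..<n] = map (\<lambda>i. xs ! \<sigma> (\<pi> i)) [0..<n]"
      using assms(1) by simp
    ultimately show ?thesis
      using True by (simp add: minor_apply del: map_eq_conv)
  qed (auto simp: minor_def restr_def)
qed

definition sigma_adjacent ::
  "'a set \<Rightarrow> (nat \<Rightarrow> ('a list \<Rightarrow> 'a) set) \<Rightarrow> ('a list \<Rightarrow> 'a) \<Rightarrow> ('a list \<Rightarrow> 'a) \<Rightarrow> bool" where
  "sigma_adjacent A C f\<^sub>1 f\<^sub>2 \<longleftrightarrow> (\<exists>g\<in>C 6. \<forall>x\<in>A. \<forall>y\<in>A. \<forall>z\<in>A.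
      f\<^sub>1 [x, y, z] = g [x, y, x, z, y, z] \<and> f\<^sub>2 [x, y, z] = g [y, x, z, x, z, y])"

lemma sigma_adjacent_sym:
  assumes "clone A C" "sigma_adjacent A C f\<^sub>1 f\<^sub>2"
  shows "sigma_adjacent A C f\<^sub>2 f\<^sub>1"
proof -
  obtain g where g: "g \<in> C 6"
    "\<forall>x\<in>A. \<forall>y\<in>A. \<forall>z\<in>A. f\<^sub>1 [x, y, z] = g [x, y, x, z, y, z] \<and> f\<^sub>2 [x, y, z] = g [y, x, z, x, z, y]"
    using assms(2) unfolding sigma_adjacent_def by blast
  define swap :: "nat \<Rightarrow> nat" where "swap i = [1, 0, 3, 2, 5, 4] ! i" for i
  have "\<forall>i<6. swap i < 6"
    by (simp add: swap_def nth_Cons split: nat.split)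
  then have "minor A 6 6 swap g \<in> C 6"
    using minor_in_clone[OF assms(1) g(1)] by blast
  moreover have "minor A 6 6 swap g [x, y, x, z, y, z] = g [y, x, z, x, z, y]"
    "minor A 6 6 swap g [y, x, z, x, z, y] = g [x, y, x, z, y, z]"
    if "x \<in> A" "y \<in> A" "z \<in> A" for x y z
    using that by (simp_all add: minor_apply swap_def upt_rec)
  ultimately show ?thesis
    using g(2) unfolding sigma_adjacent_def by metis
qed

(* The six positions of the two sides of the identities of Sigma carry the six ordered pairs
   of distinct variables; this is why coordinatewise distinct minors are adjacent. *)
definition pair_position :: "nat \<Rightarrow> nat \<Rightarrow> nat" where
  "pair_position a b =
    (if a = 0 \<and> b = 1 then 0 else if a = 1 \<and> b = 0 then 1 else if a = 0 then 2
     else if a = 2 \<and> b = 0 then 3 else if a = 1 then 4 else 5)"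

lemma pair_position:
  assumes "a < 3" "b < 3" "a \<noteq> b"
  shows "pair_position a b < 6"
    and "[x, y, x, z, y, z] ! pair_position a b = [x, y, z] ! a"
    and "[y, x, z, x, z, y] ! pair_position a b = [x, y, z] ! b"
proof -
  have "a \<in> {0, 1, 2}" "b \<in> {0, 1, 2}"
    using assms by auto
  then show "pair_position a b < 6" "[x, y, x, z, y, z] ! pair_position a b = [x, y, z] ! a"
    "[y, x, z, x, z, y] ! pair_position a b = [x, y, z] ! b"
    using assms(3) by (auto simp: pair_position_def)
qed

lemma sigma_adjacent_minors:
  assumes "clone A C" "f \<in> C n"
    and "\<forall>i<n. \<sigma> i < 3" "\<forall>i<n. \<tau> i < 3" "\<forall>i<n. \<sigma> i \<noteq> \<tau> i"
  shows "sigma_adjacent A C (minor A n 3 \<sigma> f) (minor A n 3 \<tau> f)"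
proof -
  define \<rho> where "\<rho> i = pair_position (\<sigma> i) (\<tau> i)" for i
  have "minor A n 6 \<rho> f \<in> C 6"
    using assms pair_position(1) by (intro minor_in_clone) (auto simp: \<rho>_def)
  moreover have "[x, y, z] ! \<sigma> i = [x, y, x, z, y, z] ! \<rho> i" "[x, y, z] ! \<tau> i = [y, x, z, x, z, y] ! \<rho> i"
    if "i < n" for i and x y z :: 'a
    using assms(3-5) that by (simp_all add: \<rho>_def pair_position(2,3))
  then have "map (\<lambda>i. [x, y, z] ! \<sigma> i) [0..<n] = map (\<lambda>i. [x, y, x, z, y, z] ! \<rho> i) [0..<n]"
    "map (\<lambda>i. [x, y, z] ! \<tau> i) [0..<n] = map (\<lambda>i. [y, x, z, x, z, y] ! \<rho> i) [0..<n]" for x y z :: 'a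
    by simp_all
  ultimately show ?thesis
    unfolding sigma_adjacent_def
    by (intro bexI[of _ "minor A n 6 \<rho> f"]) (simp_all add: minor_apply del: map_eq_conv)
qed

definition minor_colors :: "'a set \<Rightarrow> (('a list \<Rightarrow> 'a) \<Rightarrow> nat) \<Rightarrow> nat \<Rightarrow> ('a list \<Rightarrow> 'a) \<Rightarrow> (nat \<Rightarrow> nat) \<Rightarrow> nat" where
  "minor_colors A c n f \<sigma> = c (minor A n 3 \<sigma> f)"

lemma K3_polymorphism_minor_colors:
  assumes "clone A C" "proper_coloring 3 (C 3) (sigma_adjacent A C) c" "f \<in> C n"
  shows "K3_polymorphism n (minor_colors A c n f)"
proof
  show "minor_colors A c n f \<sigma> = minor_colors A c n f \<tau>" if "\<forall>i<n. \<sigma> i = \<tau> i" for \<sigma> \<tau>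
    by (simp add: minor_colors_def minor_cong[OF that])
  show "minor_colors A c n f \<sigma> < 3" if "\<forall>i<n. \<sigma> i < 3" for \<sigma>
    using assms minor_in_clone[OF assms(1,3) that] by (simp add: minor_colors_def proper_coloring_def)
  show "minor_colors A c n f \<sigma> \<noteq> minor_colors A c n f \<tau>"
    if "\<forall>i<n. \<sigma> i < 3" "\<forall>i<n. \<tau> i < 3" "\<forall>i<n. \<sigma> i \<noteq> \<tau> i" for \<sigma> \<tau>
    using assms(2) sigma_adjacent_minors[OF assms(1,3) that] minor_in_clone[OF assms(1,3)] that
    by (simp add: minor_colors_def proper_coloring_def)
qed

lemma determined_by_minor_colors_minor:
  assumes "\<forall>j<n. \<pi> j < k" "determined_by n (minor_colors A c n f) i"
  shows "determined_by k (minor_colors A c k (minor A n k \<pi> f)) (\<pi> i)"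
proof -
  have colors_minor: "minor_colors A c k (minor A n k \<pi> f) \<sigma> = minor_colors A c n f (\<sigma> \<circ> \<pi>)"
    if "\<forall>j<k. \<sigma> j < 3" for \<sigma>
    by (simp add: minor_colors_def minor_minor[OF assms(1) that])
  have "\<pi> i < k"
    using assms unfolding determined_by_def by blast
  moreover have "minor_colors A c k (minor A n k \<pi> f) \<sigma> = minor_colors A c k (minor A n k \<pi> f) (\<lambda>_. \<sigma> (\<pi> i))"
    if \<sigma>: "\<forall>j<k. \<sigma> j < 3" for \<sigma>
  proof -
    have "\<forall>j<n. (\<sigma> \<circ> \<pi>) j < 3"
      using \<sigma> assms(1) by simp
    then have "minor_colors A c n f (\<sigma> \<circ> \<pi>) = minor_colors A c n f (\<lambda>_. (\<sigma> \<circ> \<pi>) i)"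
      using assms(2) unfolding determined_by_def by blast
    moreover have "\<forall>j<k. (\<lambda>_. \<sigma> (\<pi> i)) j < 3"
      using \<sigma> \<open>\<pi> i < k\<close> by simp
    ultimately show ?thesis
      using colors_minor[OF \<sigma>] colors_minor[of "\<lambda>_. \<sigma> (\<pi> i)"] by (simp add: comp_def)
  qed
  ultimately show ?thesis
    unfolding determined_by_def by blast
qed

theorem minion_hom_from_coloring:
  assumes "clone A C" "proper_coloring 3 (C 3) (sigma_adjacent A C) c"
  shows "\<exists>\<xi>. minion_hom A C (UNIV :: bool set) proj_clone \<xi>"
proof -
  define coordinate where "coordinate n f = (THE i. determined_by n (minor_colors A c n f) i)" for n f
  have coordinate: "determined_by n (minor_colors A c n f) (coordinate n f)" if "f \<in> C n" for n f
    unfolding coordinate_def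
    by (rule theI') (rule K3_polymorphism.ex1_determined_by[OF K3_polymorphism_minor_colors[OF assms that]])
  have coordinate_minor: "coordinate k (minor A n k \<pi> f) = \<pi> (coordinate n f)"
    if "f \<in> C n" "\<forall>j<n. \<pi> j < k" for n k \<pi> f
    using K3_polymorphism.determined_by_unique[OF K3_polymorphism_minor_colors[OF assms minor_in_clone[OF assms(1) that]]]
      coordinate[OF minor_in_clone[OF assms(1) that]] determined_by_minor_colors_minor[OF that(2) coordinate[OF that(1)]]
    by blast
  define \<xi> where "\<xi> n f = proj (UNIV :: bool set) n (coordinate n f)" for n f
  have "minion_hom A C UNIV proj_clone \<xi>"
    unfolding minion_hom_def
  proof (intro conjI allI impI)
    fix n f
    assume "f \<in> C n"
    then show "\<xi> n f \<in> proj_clone n"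
      using coordinate by (auto simp: \<xi>_def proj_clone_def determined_by_def)
  next
    fix n k :: nat and \<pi> f
    assume "f \<in> C n" "\<forall>i<n. \<pi> i < k"
    moreover have "coordinate n f < n"
      using coordinate[OF \<open>f \<in> C n\<close>] by (simp add: determined_by_def)
    ultimately show "\<xi> k (minor A n k \<pi> f) = minor UNIV n k \<pi> (\<xi> n f)"
      by (simp add: \<xi>_def coordinate_minor) (auto simp: proj_def minor_def restr_def)
  qed
  then show ?thesis
    by blast
qed

lemma ex_uncolorable_sigma_graph:
  assumes "clone A C" "finite F" "F \<subseteq> C 3" "\<nexists>c. proper_coloring 3 F (sigma_adjacent A C) c"
  shows "\<exists>(V :: nat set) E. graph V E \<and> \<not> three_colorable V E \<and> satisfies_Sigma A C V E"
proof -
  define V where "V = {0..<card F}"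
  obtain b where b: "bij_betw b V F"
    using ex_bij_betw_nat_finite[OF assms(2)] unfolding V_def by blast
  define E where "E = {(i, j) \<in> V \<times> V. sigma_adjacent A C (b i) (b j)}"
  have "graph V E"
    using sigma_adjacent_sym[OF assms(1)] by (auto simp: graph_def V_def E_def sym_def)
  moreover have "\<not> three_colorable V E"
  proof
    assume "three_colorable V E"
    then obtain c :: "nat \<Rightarrow> nat" where c: "\<forall>v\<in>V. c v < 3" "\<forall>(u, v)\<in>E. c u \<noteq> c v"
      unfolding three_colorable_def by blast
    have "proper_coloring 3 F (sigma_adjacent A C) (c \<circ> inv_into V b)"
      using c bij_betw_inv_into[OF b] b
      by (auto simp: proper_coloring_def E_def bij_betw_def f_inv_into_f)
    with assms(4) show False
      by blast
  qed
  moreover have "satisfies_Sigma A C V E"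
  proof -
    have "\<forall>e\<in>E. \<exists>g. g \<in> C 6 \<and> (\<forall>x\<in>A. \<forall>y\<in>A. \<forall>z\<in>A.
        b (fst e) [x, y, z] = g [x, y, x, z, y, z] \<and> b (snd e) [x, y, z] = g [y, x, z, x, z, y])"
      by (auto simp: E_def sigma_adjacent_def)
    then obtain g where "\<forall>e\<in>E. g e \<in> C 6 \<and> (\<forall>x\<in>A. \<forall>y\<in>A. \<forall>z\<in>A.
        b (fst e) [x, y, z] = g e [x, y, x, z, y, z] \<and> b (snd e) [x, y, z] = g e [y, x, z, x, z, y])"
      by (rule bchoice[THEN exE])
    moreover have "\<forall>v\<in>V. b v \<in> C 3"
      using b assms(3) by (auto simp: bij_betw_def)
    ultimately show ?thesis
      unfolding satisfies_Sigma_def by (intro exI[of _ b] exI[of _ g]) auto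
  qed
  ultimately show ?thesis
    by blast
qed

theorem lemma3p5:
  fixes A :: "'a set" and C :: "nat \<Rightarrow> ('a list \<Rightarrow> 'a) set"
  assumes "clone A C"
    and "\<not> (\<exists>\<xi>. minion_hom A C (UNIV :: bool set) proj_clone \<xi>)"
  shows "\<exists>(V :: nat set) E. graph V E \<and> \<not> three_colorable V E \<and> satisfies_Sigma A C V E"
proof (rule ccontr)
  assume "\<not> ?thesis"
  then have "\<exists>c. proper_coloring 3 F (sigma_adjacent A C) c" if "finite F" "F \<subseteq> C 3" for F
    using ex_uncolorable_sigma_graph[OF assms(1) that] by blast
  then obtain c where "proper_coloring 3 (C 3) (sigma_adjacent A C) c"
    using proper_coloring_compactness by blast
  then show False
    using minion_hom_from_coloring[OF assms(1)] assms(2) by blast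
qed

end
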